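(* Fix integers $2\le a<b$ with $a\nmid b$, a positive integer $d$, and a positive integer $k$. Assume $f^{(b)}_{b+1},\dots,f^{(b)}_{b+a-1}$ satisfy condition (T) at $\tilde{\mathbf c}\in\mathbb C^{a-1}$. Fix $\mathbf c(-\infty)\in(\mathbb C[[t]])^{a-1}$ with $c_i(-\infty)\equiv t^{di}\tilde c_i\bmod t^{di+1}$, and series $o_{b+j}(\mathbf c)$ ($j=1,\dots,a-1$) of the type described in the context. Suppose the system $\bar f^{(b)}_{b+j}(\mathbf c)=t^{d(b+j)}f^{(b)}_{b+j}(\tilde{\mathbf c})+o_{b+j}(\mathbf c)\pmod{t^{d(b+j)+k}}$, $j=1,\dots,a-1$, has a solution $\mathbf c(k-1)\in(\mathbb C[[t]])^{a-1}$ with $c_i(k-1)\equiv t^{di}\tilde c_i\bmod t^{di+1}$. Then the same system with $k$ replaced by $k+1$ has a solution $\mathbf c(k)$ with $c_i(k)\equiv c_i(k-1)\bmod t^{di+k}$ for all $i$.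
   Context: Polynomials $f^{(b)}_i(\mathbf c)$, $\mathbf c=(c_2,\dots,c_a)$, are defined by $(1+\sum_{k=2}^ac_kx^k)^{b/a}=1+\sum_{i\ge1}f^{(b)}_i(\mathbf c)x^i$. Condition (T) at $\tilde{\mathbf c}$ (for $a>2$): the Jacobian determinant at $\tilde{\mathbf c}$ of $(\bar f^{(b)}_{b+1},\dots,\bar f^{(b)}_{b+a-1})$ with $\bar f$ formed using constants $\tilde{\mathbf c}$ (formula below with $c_k(-\infty)$ replaced by $\tilde c_k$) is nonzero; for $a=2$, (T) holds at any $\tilde c\ne0$. In the system, $\bar f^{(b)}_{b+j}(\mathbf c)=f^{(b)}_{b+j}(\mathbf c)+\sum_{k=2}^{j-1}\frac{(j-k)(c_k-c_k(-\infty))}{a}f^{(b)}_{b+j-k}(\mathbf c(-\infty))-\sum_{k=2}^{j-1}\frac{j-k}{a}\sum_{l=2}^{k-2}\frac{a-l}{a}(c_{k-l}-c_{k-l}(-\infty))c_l(-\infty)f^{(b)}_{b+j-k}(\mathbf c(-\infty))$. Each $o_{b+j}(\mathbf c)\in\mathbb C[c_2,\dots,c_a][[t]]$ is a fixed ($t$-adically convergent) sum of terms of the forms (1) $\alpha t^mc_2^{l_2}\cdots c_a^{l_a}$ with $m+d\sum_pp\,l_p\ge d(b+j)+1$, or (2) $\alpha t^mc_2^{l_2}\cdots c_a^{l_a}(c_k-c_k(-\infty))(c_{k'}-c_{k'}(-\infty))$ with $m+d\sum_pp\,l_p\ge d(b+j)-d(k+k')$, where $\alpha\in\mathbb C$ and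 $m,l_p\ge0$; the unknowns $\mathbf c$ are substituted into these series. *)

theory Defs
  imports Complex_Main "HOL-Analysis.Derivative" "HOL-Computational_Algebra.Formal_Power_Series" "Jordan_Normal_Form.Determinant"
begin

text \<open>Scalars are rationals, embedded into the coefficient ring by sc.
  fcoef sc a b c i = coefficient of x^i in (1 + sum_{k=2..a} c_k x^k)^(b/a),
  computed by the (here finite) binomial series, since the inner sum has order at least 2.
  Only the values c 2, ..., c a are used.\<close>
definition fcoef :: "(rat \<Rightarrow> 'r::comm_ring_1) \<Rightarrow> nat \<Rightarrow> nat \<Rightarrow> (nat \<Rightarrow> 'r) \<Rightarrow> nat \<Rightarrow> 'r" where
  "fcoef sc a b c i =
     fps_nth (\<Sum>n\<le>i. fps_const (sc ((of_nat b / of_nat a) gchoose n))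
                 * (\<Sum>k=2..a. fps_const (c k) * fps_X ^ k) ^ n) i"

text \<open>barf sc a b C c j = bar f^(b)_(b+j)(c), formed with the constants C (= c(-infinity) or tilde c).\<close>
definition barf :: "(rat \<Rightarrow> 'r::comm_ring_1) \<Rightarrow> nat \<Rightarrow> nat \<Rightarrow> (nat \<Rightarrow> 'r) \<Rightarrow> (nat \<Rightarrow> 'r) \<Rightarrow> nat \<Rightarrow> 'r" where
  "barf sc a b C c j =
     fcoef sc a b c (b + j)
     + (\<Sum>k=2..j-1. sc ((of_nat j - of_nat k) / of_nat a) * (c k - C k) * fcoef sc a b C (b + j - k))
     - (\<Sum>k=2..j-1. sc ((of_nat j - of_nat k) / of_nat a)
          * (\<Sum>l=2..k-2. sc ((of_nat a - of_nat l) / of_nat a) * (c (k - l) - C (k - l)) * C l)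
          * fcoef sc a b C (b + j - k))"

definition condT :: "nat \<Rightarrow> nat \<Rightarrow> (nat \<Rightarrow> complex) \<Rightarrow> bool" where
  "condT a b ct =
     (if a = 2 then ct 2 \<noteq> 0
      else det (mat (a - 1) (a - 1)
             (\<lambda>(r, s). deriv (\<lambda>z. barf of_rat a b ct (ct(s + 2 := z)) (r + 1)) (ct (s + 2)))) \<noteq> 0)"

text \<open>t-adic sum  sum_m t^m * g m  in C[[t]].\<close>
definition tadic_sum :: "(nat \<Rightarrow> complex fps) \<Rightarrow> complex fps" where
  "tadic_sum g = Abs_fps (\<lambda>N. \<Sum>m\<le>N. fps_nth (g m) (N - m))"

text \<open>Evaluation of o_(b+j) at c: terms of form (1) with coefficients al1 j m l
  (alpha t^m prod_p c_p^(l p)), and terms of form (2) with coefficients al2 j m l k k'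
  (alpha t^m prod_p c_p^(l p) (c_k - C_k)(c_k' - C_k')), C = c(-infinity).\<close>
definition oval :: "nat \<Rightarrow> (nat \<Rightarrow> complex fps)
    \<Rightarrow> (nat \<Rightarrow> nat \<Rightarrow> (nat \<Rightarrow> nat) \<Rightarrow> complex)
    \<Rightarrow> (nat \<Rightarrow> nat \<Rightarrow> (nat \<Rightarrow> nat) \<Rightarrow> nat \<Rightarrow> nat \<Rightarrow> complex)
    \<Rightarrow> nat \<Rightarrow> (nat \<Rightarrow> complex fps) \<Rightarrow> complex fps" where
  "oval a C al1 al2 j c = tadic_sum (\<lambda>m.
      (\<Sum>l\<in>{l. al1 j m l \<noteq> 0}. fps_const (al1 j m l) * (\<Prod>p=2..a. c p ^ l p))
    + (\<Sum>(l, k, k')\<in>{(l, k, k'). al2 j m l k k' \<noteq> 0}.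
          fps_const (al2 j m l k k') * (\<Prod>p=2..a. c p ^ l p) * (c k - C k) * (c k' - C k')))"

text \<open>Admissibility of the coefficient families (the shape of the o_(b+j) described in the context):
  t-adic convergence (finitely many terms per power of t) and the order constraints.\<close>
definition o_admissible :: "nat \<Rightarrow> nat \<Rightarrow> nat
    \<Rightarrow> (nat \<Rightarrow> nat \<Rightarrow> (nat \<Rightarrow> nat) \<Rightarrow> complex)
    \<Rightarrow> (nat \<Rightarrow> nat \<Rightarrow> (nat \<Rightarrow> nat) \<Rightarrow> nat \<Rightarrow> nat \<Rightarrow> complex) \<Rightarrow> bool" where
  "o_admissible a b d al1 al2 \<longleftrightarrow>
     (\<forall>j m. finite {l. al1 j m l \<noteq> 0}) \<and>
     (\<forall>j m. finite {(l, k, k'). al2 j m l k k' \<noteq> 0}) \<and>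
     (\<forall>j m l. al1 j m l \<noteq> 0 \<longrightarrow>
        m + d * (\<Sum>p=2..a. p * l p) \<ge> d * (b + j) + 1) \<and>
     (\<forall>j m l k k'. al2 j m l k k' \<noteq> 0 \<longrightarrow>
        k \<in> {2..a} \<and> k' \<in> {2..a} \<and>
        int m + int d * (\<Sum>p=2..a. int p * int (l p)) \<ge> int d * int (b + j) - int d * int (k + k'))"

abbreviation fsc :: "rat \<Rightarrow> complex fps" where
  "fsc q \<equiv> fps_const (of_rat q)"

definition solves :: "nat \<Rightarrow> nat \<Rightarrow> nat \<Rightarrow> (nat \<Rightarrow> complex) \<Rightarrow> (nat \<Rightarrow> complex fps)
    \<Rightarrow> (nat \<Rightarrow> nat \<Rightarrow> (nat \<Rightarrow> nat) \<Rightarrow> complex)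
    \<Rightarrow> (nat \<Rightarrow> nat \<Rightarrow> (nat \<Rightarrow> nat) \<Rightarrow> nat \<Rightarrow> nat \<Rightarrow> complex)
    \<Rightarrow> nat \<Rightarrow> (nat \<Rightarrow> complex fps) \<Rightarrow> bool" where
  "solves a b d ct C al1 al2 K c \<longleftrightarrow>
     (\<forall>j\<in>{1..a-1}. fps_X ^ (d * (b + j) + K) dvd
        (barf fsc a b C c j
         - (fps_X ^ (d * (b + j)) * fps_const (fcoef of_rat a b ct (b + j)) + oval a C al1 al2 j c)))"

end

theory Submission
  imports Defs
begin

text \<open>A Hensel-type lifting step. Raise the approximate solution to
  \<open>c\<^sub>i = c\<^sub>i(k-1) + \<delta>\<^sub>i t\<^sup>d\<^sup>i\<^sup>+\<^sup>k\<close>. Viewed as a polynomial in the \<open>c\<^sub>i\<close> and the constants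
  \<open>c\<^sub>i(-\<infinity>)\<close>, each \<open>bar f\<^sub>b\<^sub>+\<^sub>j\<close> is weighted homogeneous of weight \<open>b + j\<close> when \<open>c\<^sub>i\<close> and
  \<open>c\<^sub>i(-\<infinity>)\<close> have weight \<open>i\<close>, and all these series start with \<open>t\<^sup>d\<^sup>i \<tilde>c\<^sub>i\<close>. Hence the
  perturbation changes \<open>bar f\<^sub>b\<^sub>+\<^sub>j\<close> at order \<open>d(b + j) + k\<close> exactly by the Jacobian of condition (T)
  applied to \<open>\<delta>\<close>, while by their order constraints the \<open>o\<^sub>b\<^sub>+\<^sub>j\<close> do not change below order
  \<open>d(b + j) + k + 1\<close>. As the Jacobian is invertible, \<open>\<delta>\<close> can be chosen to cancel the error of the
  system at order \<open>d(b + j) + k\<close>.\<close>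

section \<open>Leading terms of power series\<close>

lemma fps_X_power_dvd_iff: "fps_X ^ n dvd (f :: 'a::comm_ring_1 fps) \<longleftrightarrow> (\<forall>i<n. fps_nth f i = 0)"
proof
  assume "fps_X ^ n dvd f"
  then obtain g where "f = fps_X ^ n * g" by (auto elim: dvdE)
  then show "\<forall>i<n. fps_nth f i = 0" by (simp add: fps_X_power_mult_nth)
next
  assume "\<forall>i<n. fps_nth f i = 0"
  then have "f = fps_X ^ n * Abs_fps (\<lambda>i. fps_nth f (i + n))"
    by (intro fps_ext) (simp add: fps_X_power_mult_nth)
  then show "fps_X ^ n dvd f" by (metis dvd_triv_left)
qed

definition fps_lead :: "nat \<Rightarrow> 'a::comm_ring_1 fps \<Rightarrow> 'a \<Rightarrow> bool" where
  "fps_lead N x y \<longleftrightarrow> fps_X ^ (N + 1) dvd x - fps_X ^ N * fps_const y"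

lemma fps_lead_iff: "fps_lead N x y \<longleftrightarrow> (\<forall>i<N. fps_nth x i = 0) \<and> fps_nth x N = y"
  unfolding fps_lead_def fps_X_power_dvd_iff
  by (auto simp: fps_X_power_mult_nth less_Suc_eq)

lemma fps_lead_0_iff: "fps_lead N x 0 \<longleftrightarrow> fps_X ^ (N + 1) dvd x"
  by (simp add: fps_lead_def)

lemma fps_lead_imp_dvd: "fps_lead N x y \<Longrightarrow> fps_X ^ N dvd x"
  by (simp add: fps_lead_iff fps_X_power_dvd_iff)

lemma fps_lead_nth: "fps_X ^ N dvd x \<Longrightarrow> fps_lead N x (fps_nth x N)"
  by (simp add: fps_lead_iff fps_X_power_dvd_iff)

lemma fps_lead_monom: "fps_lead N (fps_X ^ N * fps_const c) c"
  by (simp add: fps_lead_iff fps_X_power_mult_nth)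

lemma fps_lead_monom_higher: "N < M \<Longrightarrow> fps_lead N (fps_X ^ M * fps_const c) 0"
  by (simp add: fps_lead_iff fps_X_power_mult_nth)

lemma fps_lead_add: "fps_lead N x y \<Longrightarrow> fps_lead N x' y' \<Longrightarrow> fps_lead N (x + x') (y + y')"
  and fps_lead_diff: "fps_lead N x y \<Longrightarrow> fps_lead N x' y' \<Longrightarrow> fps_lead N (x - x') (y - y')"
  and fps_lead_uminus: "fps_lead N x y \<Longrightarrow> fps_lead N (- x) (- y)"
  by (simp_all add: fps_lead_iff)

lemma fps_lead_mult:
  assumes "fps_lead N x y" "fps_lead M x' y'"
  shows "fps_lead (N + M) (x * x') (y * y')"
proof -
  obtain r r' where "x - fps_X ^ N * fps_const y = fps_X ^ (N + 1) * r"
    and "x' - fps_X ^ M * fps_const y' = fps_X ^ (M + 1) * r'"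
    using assms unfolding fps_lead_def by (auto elim!: dvdE)
  then have "x = fps_X ^ N * (fps_const y + fps_X * r)" "x' = fps_X ^ M * (fps_const y' + fps_X * r')"
    by (simp_all add: algebra_simps)
  then have "x * x' - fps_X ^ (N + M) * fps_const (y * y') =
      fps_X ^ (N + M + 1) * (fps_const y * r' + r * fps_const y' + fps_X * r * r')"
    by (simp add: algebra_simps power_add flip: fps_const_mult)
  then show ?thesis unfolding fps_lead_def by simp
qed

lemma fps_lead_perturb: "fps_lead N x y \<Longrightarrow> 0 < k \<Longrightarrow> fps_lead N (x + fps_X ^ (N + k) * fps_const c) y"
  using fps_lead_add[OF _ fps_lead_monom_higher] by fastforce

section \<open>Weighted homogeneous polynomial expressions\<close>

text \<open>Reifying \<open>barf\<close> as an expression lets its partial derivatives and leading terms be computed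
  by structural induction.\<close>

datatype pexpr = PZero | POne | PConst rat | PVar nat
  | PAdd pexpr pexpr | PMul pexpr pexpr | PNeg pexpr

primrec peval :: "(rat \<Rightarrow> 'a::comm_ring_1) \<Rightarrow> (nat \<Rightarrow> 'a) \<Rightarrow> pexpr \<Rightarrow> 'a" where
  "peval sc v PZero = 0"
| "peval sc v POne = 1"
| "peval sc v (PConst q) = sc q"
| "peval sc v (PVar n) = v n"
| "peval sc v (PAdd e1 e2) = peval sc v e1 + peval sc v e2"
| "peval sc v (PMul e1 e2) = peval sc v e1 * peval sc v e2"
| "peval sc v (PNeg e) = - peval sc v e"

primrec pdiff :: "nat \<Rightarrow> pexpr \<Rightarrow> pexpr" where
  "pdiff i PZero = PZero"
| "pdiff i POne = PZero"
| "pdiff i (PConst q) = PZero"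
| "pdiff i (PVar n) = (if n = i then POne else PZero)"
| "pdiff i (PAdd e1 e2) = PAdd (pdiff i e1) (pdiff i e2)"
| "pdiff i (PMul e1 e2) = PAdd (PMul (pdiff i e1) e2) (PMul e1 (pdiff i e2))"
| "pdiff i (PNeg e) = PNeg (pdiff i e)"

primrec weighted_hom :: "nat set \<Rightarrow> (nat \<Rightarrow> nat) \<Rightarrow> nat \<Rightarrow> pexpr \<Rightarrow> bool" where
  "weighted_hom A w W PZero = True"
| "weighted_hom A w W POne = (W = 0)"
| "weighted_hom A w W (PConst q) = (W = 0)"
| "weighted_hom A w W (PVar n) = (n \<in> A \<and> W = w n)"
| "weighted_hom A w W (PAdd e1 e2) = (weighted_hom A w W e1 \<and> weighted_hom A w W e2)"
| "weighted_hom A w W (PMul e1 e2) =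
     (\<exists>W1 W2. W = W1 + W2 \<and> weighted_hom A w W1 e1 \<and> weighted_hom A w W2 e2)"
| "weighted_hom A w W (PNeg e) = weighted_hom A w W e"

lemma weighted_hom_PMulI:
  "weighted_hom A w Wr e2 \<Longrightarrow> Wr \<le> W \<Longrightarrow> weighted_hom A w (W - Wr) e1 \<Longrightarrow> weighted_hom A w W (PMul e1 e2)"
  by force

lemma has_field_derivative_peval:
  fixes v :: "nat \<Rightarrow> 'a::real_normed_field"
  shows "((\<lambda>z. peval of_rat (v(i := z)) e) has_field_derivative peval of_rat (v(i := z0)) (pdiff i e)) (at z0)"
proof (induction e)
  case (PVar n)
  then show ?case by (cases "n = i") (auto intro!: derivative_eq_intros)
next
  case (PMul e1 e2)
  then show ?case by (auto intro!: derivative_eq_intros simp: algebra_simps)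
qed (auto intro!: derivative_eq_intros)

lemma deriv_peval:
  fixes v :: "nat \<Rightarrow> 'a::real_normed_field"
  shows "deriv (\<lambda>z. peval of_rat (v(i := z)) e) (v i) = peval of_rat v (pdiff i e)"
  using DERIV_imp_deriv[OF has_field_derivative_peval, of v i e "v i"] by simp

lemma fps_lead_peval:
  assumes "\<And>n. n \<in> A \<Longrightarrow> fps_lead (d * w n) (V n) (v n)"
  shows "weighted_hom A w W e \<Longrightarrow> fps_lead (d * W) (peval (\<lambda>q. fps_const (sc q)) V e) (peval sc v e)"
proof (induction e arbitrary: W)
  case (PMul e1 e2)
  then obtain W1 W2 where "W = W1 + W2" "weighted_hom A w W1 e1" "weighted_hom A w W2 e2" by auto
  with PMul.IH fps_lead_mult show ?case by (force simp: distrib_left)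
qed (use assms in \<open>auto simp: fps_lead_iff intro: fps_lead_add fps_lead_uminus\<close>)

text \<open>First-order Taylor expansion: raising each variable by a term \<open>k\<close> orders above its own leading
  order changes a weighted homogeneous expression, to leading order, by the directional derivative.\<close>
lemma fps_lead_peval_perturb:
  fixes sc :: "rat \<Rightarrow> 'a::comm_ring_1"
  assumes lead0: "\<And>n. n \<in> A \<Longrightarrow> fps_lead (d * w n) (V0 n) (v n)"
    and V1: "\<And>n. n \<in> A \<Longrightarrow> V1 n = V0 n + fps_X ^ (d * w n + k) * fps_const (\<delta> n)"
    and S: "finite S" "\<And>n. n \<notin> S \<Longrightarrow> \<delta> n = 0"
    and k: "0 < k"
  shows "weighted_hom A w W e \<Longrightarrow>
    fps_lead (d * W + k) (peval (\<lambda>q. fps_const (sc q)) V1 e - peval (\<lambda>q. fps_const (sc q)) V0 e)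
      (\<Sum>n\<in>S. peval sc v (pdiff n e) * \<delta> n)"
proof (induction e arbitrary: W)
  case (PVar n)
  have "(\<Sum>m\<in>S. peval sc v (pdiff m (PVar n)) * \<delta> m) = (\<Sum>m\<in>S. if n = m then \<delta> m else 0)"
    by (intro sum.cong) auto
  also have "\<dots> = \<delta> n"
    using S by (cases "n \<in> S") auto
  finally have "(\<Sum>m\<in>S. peval sc v (pdiff m (PVar n)) * \<delta> m) = \<delta> n" .
  then show ?case using PVar V1[of n] fps_lead_monom[of "d * W + k" "\<delta> n"] by simp
next
  case (PAdd e1 e2)
  then show ?case
    using fps_lead_add[OF PAdd.IH] by (simp add: algebra_simps sum.distrib)
next
  case (PMul e1 e2)
  let ?ev = "peval (\<lambda>q. fps_const (sc q))" and ?D = "\<lambda>e. \<Sum>n\<in>S. peval sc v (pdiff n e) * \<delta> n"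
  obtain W1 W2 where W: "W = W1 + W2" and h: "weighted_hom A w W1 e1" "weighted_hom A w W2 e2"
    using PMul.prems by auto
  have lead1: "fps_lead (d * w n) (V1 n) (v n)" if "n \<in> A" for n
    using fps_lead_perturb[OF lead0[OF that] k] V1[OF that] by simp
  have "fps_lead (d * W + k) ((?ev V1 e1 - ?ev V0 e1) * ?ev V1 e2) (?D e1 * peval sc v e2)"
    using fps_lead_mult[OF PMul.IH(1)[OF h(1)] fps_lead_peval[where sc=sc, OF lead1 h(2)]] by (simp add: W algebra_simps)
  moreover have "fps_lead (d * W + k) (?ev V0 e1 * (?ev V1 e2 - ?ev V0 e2)) (peval sc v e1 * ?D e2)"
    using fps_lead_mult[OF fps_lead_peval[where sc=sc, OF lead0 h(1)] PMul.IH(2)[OF h(2)]] by (simp add: W algebra_simps)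
  ultimately have "fps_lead (d * W + k) ((?ev V1 e1 - ?ev V0 e1) * ?ev V1 e2 + ?ev V0 e1 * (?ev V1 e2 - ?ev V0 e2))
      (?D e1 * peval sc v e2 + peval sc v e1 * ?D e2)"
    by (rule fps_lead_add)
  then show ?case
    by (simp add: algebra_simps sum_distrib_left sum_distrib_right sum.distrib)
next
  case (PNeg e)
  then show ?case using fps_lead_uminus[OF PNeg.IH] by (simp add: sum_negf)
qed (simp_all add: fps_lead_iff)

section \<open>The system as polynomial expressions\<close>

definition psum_list :: "pexpr list \<Rightarrow> pexpr" where
  "psum_list es = foldr PAdd es PZero"

lemma peval_psum_list_upt:
  "peval sc v (psum_list (map f [m..<n])) = (\<Sum>i\<in>{m..<n}. peval sc v (f i))"
proof -
  have "peval sc v (psum_list es) = sum_list (map (peval sc v) es)" for es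
    unfolding psum_list_def by (induction es) auto
  then show ?thesis by (simp add: sum_list_distinct_conv_sum_set)
qed

lemma weighted_hom_psum_list:
  "(\<And>x. x \<in> set xs \<Longrightarrow> weighted_hom A w W (f x)) \<Longrightarrow> weighted_hom A w W (psum_list (map f xs))"
  unfolding psum_list_def by (induction xs) auto

lemma fps_nth_sum_monoms:
  "fps_nth (\<Sum>k=2..a. fps_const (c k) * fps_X ^ k) i = (if 2 \<le> i \<and> i \<le> a then c i else (0::'a::comm_ring_1))"
proof -
  have "fps_nth (\<Sum>k=2..a. fps_const (c k) * fps_X ^ k) i = (\<Sum>k=2..a. if i = k then c k else 0)"
    by (simp only: fps_sum_nth) (intro sum.cong, auto)
  then show ?thesis by (simp add: sum.delta)
qed

primrec pexpr_power_coeff :: "nat \<Rightarrow> (nat \<Rightarrow> nat) \<Rightarrow> nat \<Rightarrow> nat \<Rightarrow> pexpr" where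
  "pexpr_power_coeff a f 0 n = (if n = 0 then POne else PZero)"
| "pexpr_power_coeff a f (Suc m) n = psum_list (map (\<lambda>i. if 2 \<le> i \<and> i \<le> a
      then PMul (PVar (f i)) (pexpr_power_coeff a f m (n - i)) else PZero) [0..<Suc n])"

lemma peval_pexpr_power_coeff:
  "peval sc v (pexpr_power_coeff a f m n) = fps_nth ((\<Sum>k=2..a. fps_const (v (f k)) * fps_X ^ k) ^ m) n"
proof (induction m arbitrary: n)
  case (Suc m)
  let ?Q = "\<Sum>k=2..a. fps_const (v (f k)) * fps_X ^ k"
  have "peval sc v (pexpr_power_coeff a f (Suc m) n) = (\<Sum>i=0..n. fps_nth ?Q i * fps_nth (?Q ^ m) (n - i))"
    unfolding pexpr_power_coeff.simps peval_psum_list_upt atLeastLessThanSuc_atLeastAtMost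
    by (intro sum.cong) (auto simp: fps_nth_sum_monoms Suc.IH)
  then show ?case by (simp add: fps_mult_nth)
qed simp

lemma weighted_hom_pexpr_power_coeff:
  assumes "\<And>i. 2 \<le> i \<Longrightarrow> i \<le> a \<Longrightarrow> f i \<in> A \<and> w (f i) = i"
  shows "weighted_hom A w n (pexpr_power_coeff a f m n)"
proof (induction m arbitrary: n)
  case (Suc m)
  show ?case unfolding pexpr_power_coeff.simps
  proof (rule weighted_hom_psum_list)
    fix i assume "i \<in> set [0..<Suc n]"
    then show "weighted_hom A w n (if 2 \<le> i \<and> i \<le> a then PMul (PVar (f i)) (pexpr_power_coeff a f m (n - i)) else PZero)"
      using assms[of i] Suc.IH[of "n - i"] by (auto intro!: exI[where x = "n - i"])
  qed
qed simp

definition pexpr_fcoef :: "nat \<Rightarrow> nat \<Rightarrow> (nat \<Rightarrow> nat) \<Rightarrow> nat \<Rightarrow> pexpr" where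
  "pexpr_fcoef a b f n =
     psum_list (map (\<lambda>m. PMul (PConst ((of_nat b / of_nat a) gchoose m)) (pexpr_power_coeff a f m n)) [0..<Suc n])"

lemma peval_pexpr_fcoef: "peval sc v (pexpr_fcoef a b f n) = fcoef sc a b (\<lambda>k. v (f k)) n"
  unfolding pexpr_fcoef_def fcoef_def peval_psum_list_upt atLeastLessThanSuc_atLeastAtMost atLeast0AtMost
  by (simp add: fps_sum_nth peval_pexpr_power_coeff)

lemma weighted_hom_pexpr_fcoef:
  assumes "\<And>i. 2 \<le> i \<Longrightarrow> i \<le> a \<Longrightarrow> f i \<in> A \<and> w (f i) = i"
  shows "weighted_hom A w n (pexpr_fcoef a b f n)"
  unfolding pexpr_fcoef_def
  by (rule weighted_hom_psum_list) (auto intro!: weighted_hom_PMulI weighted_hom_pexpr_power_coeff assms)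

text \<open>In \<open>barf\<close> the constants \<open>C\<close> are treated as variables as well: \<open>c\<^sub>i\<close> becomes variable
  \<open>2 i\<close> and \<open>C\<^sub>i\<close> variable \<open>2 i + 1\<close>, both of weight \<open>i\<close>.\<close>
definition interleave :: "(nat \<Rightarrow> 'a) \<Rightarrow> (nat \<Rightarrow> 'a) \<Rightarrow> nat \<Rightarrow> 'a" where
  "interleave c C n = (if even n then c (n div 2) else C (n div 2))"

lemma interleave_even [simp]: "interleave c C (2 * i) = c i"
  and interleave_odd [simp]: "interleave c C (Suc (2 * i)) = C i"
  by (simp_all add: interleave_def)

lemma interleave_upd_even: "interleave (c(i := z)) C = (interleave c C)(2 * i := z)"
  by (auto simp: interleave_def fun_eq_iff elim!: evenE)

definition pexpr_delta :: "nat \<Rightarrow> pexpr" where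
  "pexpr_delta k = PAdd (PVar (2 * k)) (PNeg (PVar (2 * k + 1)))"

definition pexpr_barf :: "nat \<Rightarrow> nat \<Rightarrow> nat \<Rightarrow> pexpr" where
  "pexpr_barf a b j =
     PAdd (pexpr_fcoef a b (\<lambda>i. 2 * i) (b + j))
      (PAdd (psum_list (map (\<lambda>k. PMul (PMul (PConst ((of_nat j - of_nat k) / of_nat a)) (pexpr_delta k))
                                   (pexpr_fcoef a b (\<lambda>i. 2 * i + 1) (b + j - k))) [2..<j]))
        (PNeg (psum_list (map (\<lambda>k. PMul (PMul (PConst ((of_nat j - of_nat k) / of_nat a))
           (psum_list (map (\<lambda>l. PMul (PMul (PConst ((of_nat a - of_nat l) / of_nat a)) (pexpr_delta (k - l)))
                                   (PVar (2 * l + 1))) [2..<k - 1])))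
           (pexpr_fcoef a b (\<lambda>i. 2 * i + 1) (b + j - k))) [2..<j]))))"

lemma peval_pexpr_barf: "peval sc (interleave c C) (pexpr_barf a b j) = barf sc a b C c j"
proof -
  have "{2..j - 1} = {2..<j}" "{2..k - 2} = {2..<k - 1}" for k :: nat by auto
  then show ?thesis
    unfolding pexpr_barf_def barf_def pexpr_delta_def
    by (simp add: peval_psum_list_upt peval_pexpr_fcoef del: mult_2 mult_2_right)
qed

lemma weighted_hom_pexpr_barf:
  assumes "j \<le> a" and A: "\<And>i. 2 \<le> i \<Longrightarrow> i \<le> a \<Longrightarrow> 2 * i \<in> A \<and> 2 * i + 1 \<in> A"
  shows "weighted_hom A (\<lambda>n. n div 2) (b + j) (pexpr_barf a b j)"
proof -
  let ?hom = "weighted_hom A (\<lambda>n. n div 2)"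
  have fcoef: "?hom n (pexpr_fcoef a b (\<lambda>i. 2 * i) n)" "?hom n (pexpr_fcoef a b (\<lambda>i. 2 * i + 1) n)" for n
    using A by (auto intro!: weighted_hom_pexpr_fcoef)
  have delta: "?hom k (pexpr_delta k)" if "2 \<le> k" "k \<le> a" for k
    using A[OF that] by (simp add: pexpr_delta_def)
  have correction_term: "?hom k (PMul (PMul (PConst q) (pexpr_delta (k - l))) (PVar (Suc (2 * l))))"
    if "2 \<le> l" "l + 2 \<le> k" "k \<le> a" for q k l
    using that by - (rule weighted_hom_PMulI[where Wr = l], auto intro: delta dest: A)
  have fcoef_term: "?hom (b + j) (PMul (PMul (PConst q) e) (pexpr_fcoef a b (\<lambda>i. Suc (2 * i)) (b + j - k)))"
    if "?hom k e" "k < j" for q e k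
    using that fcoef(2)[of "b + j - k"] by - (rule weighted_hom_PMulI[where Wr = "b + j - k"], auto)
  show ?thesis
    unfolding pexpr_barf_def using assms(1)
    by (auto intro!: weighted_hom_psum_list fcoef fcoef_term delta correction_term simp del: weighted_hom.simps(6))
qed

lemma deriv_barf:
  fixes ct :: "nat \<Rightarrow> complex"
  shows "deriv (\<lambda>z. barf of_rat a b ct (ct(i := z)) j) (ct i) =
    peval of_rat (interleave ct ct) (pdiff (2 * i) (pexpr_barf a b j))"
proof -
  have "(\<lambda>z. barf of_rat a b ct (ct(i := z)) j) = (\<lambda>z. peval of_rat ((interleave ct ct)(2 * i := z)) (pexpr_barf a b j))"
    by (simp add: peval_pexpr_barf[symmetric] interleave_upd_even)
  then show ?thesis
    using deriv_peval[of "interleave ct ct" "2 * i" "pexpr_barf a b j"] by simp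
qed

lemma fps_lead_barf_perturb:
  fixes ct \<delta> :: "nat \<Rightarrow> complex"
  assumes "j \<le> a" "0 < k"
    and c0: "\<And>i. i \<in> {2..a} \<Longrightarrow> fps_lead (d * i) (c0 i) (ct i)"
    and C: "\<And>i. i \<in> {2..a} \<Longrightarrow> fps_lead (d * i) (C i) (ct i)"
    and c1: "\<And>i. i \<in> {2..a} \<Longrightarrow> c1 i = c0 i + fps_X ^ (d * i + k) * fps_const (\<delta> i)"
    and \<delta>: "\<And>i. i \<notin> {2..a} \<Longrightarrow> \<delta> i = 0"
  shows "fps_lead (d * (b + j) + k) (barf fsc a b C c1 j - barf fsc a b C c0 j)
    (\<Sum>i\<in>{2..a}. deriv (\<lambda>z. barf of_rat a b ct (ct(i := z)) j) (ct i) * \<delta> i)"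
proof -
  let ?A = "{n. n div 2 \<in> {2..a}}" and ?S = "(\<lambda>i. 2 * i) ` {2..a}"
  have "fps_lead (d * (b + j) + k)
      (peval fsc (interleave c1 C) (pexpr_barf a b j) - peval fsc (interleave c0 C) (pexpr_barf a b j))
      (\<Sum>n\<in>?S. peval of_rat (interleave ct ct) (pdiff n (pexpr_barf a b j)) * interleave \<delta> (\<lambda>_. 0) n)"
  proof (rule fps_lead_peval_perturb[where A = ?A and w = "\<lambda>n. n div 2"])
    fix n assume "n \<in> ?A"
    then show "fps_lead (d * (n div 2)) (interleave c0 C n) (interleave ct ct n)"
      and "interleave c1 C n = interleave c0 C n + fps_X ^ (d * (n div 2) + k) * fps_const (interleave \<delta> (\<lambda>_. 0) n)"
      using c0 C c1 by (auto simp: interleave_def)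
  next
    fix n assume "n \<notin> ?S"
    then show "interleave \<delta> (\<lambda>_. 0) n = 0"
      using \<delta> by (auto simp: interleave_def image_iff elim!: evenE)
  qed (use assms(1,2) in \<open>auto intro: weighted_hom_pexpr_barf\<close>)
  moreover have "(\<Sum>n\<in>?S. peval of_rat (interleave ct ct) (pdiff n (pexpr_barf a b j)) * interleave \<delta> (\<lambda>_. 0) n)
      = (\<Sum>i\<in>{2..a}. deriv (\<lambda>z. barf of_rat a b ct (ct(i := z)) j) (ct i) * \<delta> i)"
    by (simp add: sum.reindex inj_on_def deriv_barf)
  ultimately show ?thesis
    by (simp add: peval_pexpr_barf)
qed

section \<open>The higher-order terms\<close>

definition fps_close :: "nat \<Rightarrow> nat \<Rightarrow> 'a::comm_ring_1 fps \<Rightarrow> 'a fps \<Rightarrow> bool" where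
  "fps_close A B x0 x1 \<longleftrightarrow> fps_X ^ A dvd x0 \<and> fps_X ^ A dvd x1 \<and> fps_X ^ B dvd x1 - x0"

lemma fps_close_imp_dvd: "fps_close A B x0 x1 \<Longrightarrow> M \<le> B \<Longrightarrow> fps_X ^ M dvd x1 - x0"
  unfolding fps_close_def by (meson dvd_trans le_imp_power_dvd)

lemma fps_close_cmult: "fps_close A B x0 x1 \<Longrightarrow> fps_close A B (fps_const c * x0) (fps_const c * x1)"
  unfolding fps_close_def by (simp add: right_diff_distrib[symmetric])

lemma fps_close_mult:
  assumes "fps_close A B x0 x1" "fps_close A' B' y0 y1"
  shows "fps_close (A + A') (min (B + A') (A + B')) (x0 * y0) (x1 * y1)"
proof -
  let ?M = "min (B + A') (A + B')"
  have "fps_X ^ (B + A') dvd (x1 - x0) * y1" "fps_X ^ (A + B') dvd x0 * (y1 - y0)"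
    using assms unfolding fps_close_def by (simp_all add: power_add mult_dvd_mono)
  moreover have "fps_X ^ ?M dvd fps_X ^ (B + A')" "fps_X ^ ?M dvd fps_X ^ (A + B')"
    by (simp_all add: le_imp_power_dvd)
  ultimately have "fps_X ^ ?M dvd (x1 - x0) * y1 + x0 * (y1 - y0)"
    by (blast intro: dvd_add dvd_trans)
  moreover have "(x1 - x0) * y1 + x0 * (y1 - y0) = x1 * y1 - x0 * y0"
    by (simp add: algebra_simps)
  ultimately show ?thesis using assms unfolding fps_close_def by (simp add: power_add mult_dvd_mono)
qed

lemma fps_close_prod:
  "finite P \<Longrightarrow> (\<And>p. p \<in> P \<Longrightarrow> fps_close (A p) (A p + k) (x0 p) (x1 p)) \<Longrightarrow>
    fps_close (\<Sum>p\<in>P. A p) ((\<Sum>p\<in>P. A p) + k) (\<Prod>p\<in>P. x0 p) (\<Prod>p\<in>P. x1 p)"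
proof (induction P rule: finite_induct)
  case empty
  then show ?case by (simp add: fps_close_def)
next
  case (insert p P)
  have "fps_close (A p + sum A P) (min (A p + k + sum A P) (A p + (sum A P + k)))
      (x0 p * prod x0 P) (x1 p * prod x1 P)"
    using insert.prems insert.IH by (intro fps_close_mult) simp_all
  then show ?case using insert.hyps by (simp add: add_ac)
qed

lemma fps_close_power:
  "fps_close A (A + k) x0 x1 \<Longrightarrow> fps_close (l * A) (l * A + k) (x0 ^ l) (x1 ^ l)"
  using fps_close_prod[of "{..<l}" "\<lambda>_. A" k "\<lambda>_. x0" "\<lambda>_. x1"] by simp

lemma fps_close_monomial:
  assumes "\<And>p. p \<in> {2..a} \<Longrightarrow> fps_close (d * p) (d * p + k) (c0 p) (c1 p)"
  shows "fps_close (d * (\<Sum>p=2..a. p * l p)) (d * (\<Sum>p=2..a. p * l p) + k)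
    (\<Prod>p=2..a. c0 p ^ l p) (\<Prod>p=2..a. c1 p ^ l p)"
proof -
  have "(\<Sum>p=2..a. l p * (d * p)) = d * (\<Sum>p=2..a. p * l p)"
    by (simp add: sum_distrib_left mult_ac)
  moreover have "fps_close (\<Sum>p=2..a. l p * (d * p)) ((\<Sum>p=2..a. l p * (d * p)) + k)
      (\<Prod>p=2..a. c0 p ^ l p) (\<Prod>p=2..a. c1 p ^ l p)"
    by (rule fps_close_prod) (simp_all add: assms fps_close_power)
  ultimately show ?thesis by simp
qed

lemma tadic_sum_diff: "tadic_sum f - tadic_sum g = tadic_sum (\<lambda>m. f m - g m)"
  unfolding tadic_sum_def by (rule fps_ext) (simp add: sum_subtractf)

lemma tadic_sum_dvd:
  assumes "\<And>m. fps_X ^ (N - m) dvd h m"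
  shows "fps_X ^ N dvd tadic_sum h"
  unfolding fps_X_power_dvd_iff
proof (intro allI impI)
  fix i assume "i < N"
  then have "fps_nth (h m) (i - m) = 0" if "m \<le> i" for m
    using that assms[of m] unfolding fps_X_power_dvd_iff by simp
  then show "fps_nth (tadic_sum h) i = 0"
    unfolding tadic_sum_def by simp
qed

lemma oval_perturb:
  assumes adm: "o_admissible a b d al1 al2" and "0 < k"
    and c0: "\<And>i. i \<in> {2..a} \<Longrightarrow> fps_lead (d * i) (c0 i) (ct i)"
    and C: "\<And>i. i \<in> {2..a} \<Longrightarrow> fps_lead (d * i) (C i) (ct i)"
    and c1: "\<And>i. i \<in> {2..a} \<Longrightarrow> c1 i = c0 i + fps_X ^ (d * i + k) * fps_const (\<delta> i)"
  shows "fps_X ^ (d * (b + j) + k + 1) dvd oval a C al1 al2 j c1 - oval a C al1 al2 j c0"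
proof -
  let ?N = "Suc (d * (b + j) + k)"
  have c1_lead: "fps_lead (d * i) (c1 i) (ct i)" if "i \<in> {2..a}" for i
    using fps_lead_perturb[OF c0[OF that] \<open>0 < k\<close>] c1[OF that] by simp
  have close: "fps_close (d * i) (d * i + k) (c0 i) (c1 i)" if "i \<in> {2..a}" for i
    using c1[OF that] fps_lead_imp_dvd[OF c0[OF that]] fps_lead_imp_dvd[OF c1_lead[OF that]]
    by (simp add: fps_close_def)
  have close_C: "fps_close (d * i + 1) (d * i + k) (c0 i - C i) (c1 i - C i)" if "i \<in> {2..a}" for i
    using c1[OF that] fps_lead_diff[OF c0[OF that] C[OF that]] fps_lead_diff[OF c1_lead[OF that] C[OF that]]
    by (simp add: fps_close_def fps_lead_0_iff)
  have monomial: "fps_close (d * (\<Sum>p=2..a. p * l p)) (d * (\<Sum>p=2..a. p * l p) + k)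
      (\<Prod>p=2..a. c0 p ^ l p) (\<Prod>p=2..a. c1 p ^ l p)" for l
    by (rule fps_close_monomial) (rule close)
  have type1: "fps_X ^ (?N - m) dvd fps_const (al1 j m l) * (\<Prod>p=2..a. c1 p ^ l p)
      - fps_const (al1 j m l) * (\<Prod>p=2..a. c0 p ^ l p)" if "al1 j m l \<noteq> 0" for m l
  proof -
    have "m + d * (\<Sum>p=2..a. p * l p) \<ge> d * (b + j) + 1"
      using adm that unfolding o_admissible_def by blast
    then show ?thesis
      by (intro fps_close_imp_dvd[OF fps_close_cmult[OF monomial]]) linarith
  qed
  have type2: "fps_X ^ (?N - m) dvd
      fps_const (al2 j m l i i') * (\<Prod>p=2..a. c1 p ^ l p) * (c1 i - C i) * (c1 i' - C i')
    - fps_const (al2 j m l i i') * (\<Prod>p=2..a. c0 p ^ l p) * (c0 i - C i) * (c0 i' - C i')"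
    if "al2 j m l i i' \<noteq> 0" for m l i i'
  proof -
    let ?S = "d * (\<Sum>p=2..a. p * l p)"
    have i: "i \<in> {2..a}" "i' \<in> {2..a}"
      and order: "int m + int d * (\<Sum>p=2..a. int p * int (l p)) \<ge> int d * int (b + j) - int d * int (i + i')"
      using adm that unfolding o_admissible_def by blast+
    have "(\<Sum>p=2..a. int p * int (l p)) = int (\<Sum>p=2..a. p * l p)" by simp
    with order have "int (d * (b + j)) \<le> int (m + ?S + d * (i + i'))"
      by (simp only: of_nat_mult of_nat_add)
    then have "m + ?S + d * i + d * i' \<ge> d * (b + j)"
      by (simp only: of_nat_le_iff distrib_left add.assoc)
    moreover have "fps_close (?S + (d * i + 1) + (d * i' + 1))
        (min (min (?S + k + (d * i + 1)) (?S + (d * i + k)) + (d * i' + 1)) (?S + (d * i + 1) + (d * i' + k)))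
        (fps_const (al2 j m l i i') * ((\<Prod>p=2..a. c0 p ^ l p) * (c0 i - C i) * (c0 i' - C i')))
        (fps_const (al2 j m l i i') * ((\<Prod>p=2..a. c1 p ^ l p) * (c1 i - C i) * (c1 i' - C i')))"
      by (intro fps_close_cmult fps_close_mult monomial close_C i)
    ultimately show ?thesis
      by (simp only: mult.assoc) (erule fps_close_imp_dvd, linarith)
  qed
  have per_power: "fps_X ^ (?N - m) dvd
      (\<Sum>l\<in>{l. al1 j m l \<noteq> 0}. fps_const (al1 j m l) * (\<Prod>p=2..a. c1 p ^ l p)
        - fps_const (al1 j m l) * (\<Prod>p=2..a. c0 p ^ l p))
    + (\<Sum>(l, i, i')\<in>{(l, i, i'). al2 j m l i i' \<noteq> 0}.
        fps_const (al2 j m l i i') * (\<Prod>p=2..a. c1 p ^ l p) * (c1 i - C i) * (c1 i' - C i')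
      - fps_const (al2 j m l i i') * (\<Prod>p=2..a. c0 p ^ l p) * (c0 i - C i) * (c0 i' - C i'))" for m
    by (intro dvd_add dvd_sum) (auto intro: type1 type2)
  show ?thesis
    unfolding oval_def tadic_sum_diff
    by (intro tadic_sum_dvd) (use per_power in \<open>simp only: add_diff_add split_def sum_subtractf Suc_eq_plus1\<close>)
qed

section \<open>The Jacobian and the lifting step\<close>

lemma gchoose_half_odd_nonzero:
  assumes "odd b"
  shows "(of_nat b / 2 :: 'a::field_char_0) gchoose m \<noteq> 0"
proof -
  have "of_nat b / 2 - of_nat i \<noteq> (0::'a)" for i
  proof
    assume "of_nat b / 2 - of_nat i = (0::'a)"
    then have "of_nat b = (of_nat (2 * i) :: 'a)" by (simp add: field_simps)
    with assms show False by (simp only: of_nat_eq_iff) simp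
  qed
  then have "fact m * ((of_nat b / 2 :: 'a) gchoose m) \<noteq> 0"
    unfolding gbinomial_mult_fact by simp
  then show ?thesis by simp
qed

lemma fcoef_two_odd:
  assumes "odd b"
  shows "fcoef sc 2 b c (b + 1) = sc ((of_nat b / 2) gchoose ((b + 1) div 2)) * c 2 ^ ((b + 1) div 2)"
proof -
  let ?m = "(b + 1) div 2" and ?g = "\<lambda>n. sc ((of_nat b / 2) gchoose n)"
  have Q: "(\<Sum>k=2..2. fps_const (c k) * fps_X ^ k) ^ n = fps_X ^ (2 * n) * fps_const (c 2 ^ n)" for n
    by (simp add: power_mult_distrib fps_const_power mult.commute flip: power_mult)
  have "fcoef sc 2 b c (b + 1) = (\<Sum>n\<le>b + 1. if b + 1 = 2 * n then ?g n * c 2 ^ n else 0)"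
    unfolding fcoef_def fps_sum_nth Q by (intro sum.cong) (auto simp: fps_X_power_mult_nth)
  also have "\<dots> = (\<Sum>n\<le>b + 1. if n = ?m then ?g n * c 2 ^ n else 0)"
    using assms by (intro sum.cong) (auto elim!: oddE)
  finally show ?thesis by simp
qed

definition barf_jacobian :: "nat \<Rightarrow> nat \<Rightarrow> (nat \<Rightarrow> complex) \<Rightarrow> complex mat" where
  "barf_jacobian a b ct = mat (a - 1) (a - 1)
     (\<lambda>(r, s). deriv (\<lambda>z. barf of_rat a b ct (ct(s + 2 := z)) (r + 1)) (ct (s + 2)))"

text \<open>For \<open>a = 2\<close> condition (T) only asks \<open>c\<^sub>2 \<noteq> 0\<close>; the Jacobian is then a nonzero multiple of
  \<open>c\<^sub>2\<^sup>(\<^sup>b\<^sup>-\<^sup>1\<^sup>)\<^sup>/\<^sup>2\<close>, because \<open>b\<close> is odd.\<close>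
lemma det_barf_jacobian_nonzero:
  assumes "condT a b ct" "2 \<le> a" "\<not> a dvd b"
  shows "det (barf_jacobian a b ct) \<noteq> 0"
proof (cases "a = 2")
  case True
  let ?m = "(b + 1) div 2" and ?g = "(of_nat b / 2 :: rat) gchoose ((b + 1) div 2)"
  have b: "odd b" and ct: "ct 2 \<noteq> 0"
    using assms True unfolding condT_def by auto
  have "(\<lambda>z. barf of_rat 2 b ct (ct(2 := z)) 1) = (\<lambda>z. of_rat ?g * z ^ ?m)"
    unfolding barf_def fcoef_two_odd[OF b] by simp
  moreover have "((\<lambda>z. of_rat ?g * z ^ ?m) has_field_derivative of_rat ?g * (of_nat ?m * ct 2 ^ (?m - 1))) (at (ct 2))"
    by (auto intro!: derivative_eq_intros)
  ultimately have "deriv (\<lambda>z. barf of_rat 2 b ct (ct(2 := z)) 1) (ct 2) = of_rat ?g * (of_nat ?m * ct 2 ^ (?m - 1))"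
    by (simp add: DERIV_imp_deriv)
  moreover have "?m \<noteq> 0" using b by (auto elim!: oddE)
  moreover have "det (barf_jacobian a b ct) = barf_jacobian a b ct $$ (0, 0)"
    using True by (intro det_single) (simp add: barf_jacobian_def)
  ultimately show ?thesis
    using True ct gchoose_half_odd_nonzero[OF b] by (simp add: barf_jacobian_def numeral_2_eq_2)
next
  case False
  then show ?thesis using assms(1) unfolding condT_def barf_jacobian_def by simp
qed

lemma barf_jacobian_solvable:
  assumes "det (barf_jacobian a b ct) \<noteq> 0" "2 \<le> a"
  obtains \<delta> where "\<And>i. i \<notin> {2..a} \<Longrightarrow> \<delta> i = 0"
    and "\<And>j. j \<in> {1..a - 1} \<Longrightarrow> (\<Sum>i\<in>{2..a}. deriv (\<lambda>z. barf of_rat a b ct (ct(i := z)) j) (ct i) * \<delta> i) = e j"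
proof -
  let ?J = "barf_jacobian a b ct"
  have J: "?J \<in> carrier_mat (a - 1) (a - 1)" by (simp add: barf_jacobian_def)
  then have "?J \<in> Units (ring_mat TYPE(complex) (a - 1) undefined)"
    using assms(1) by (rule det_non_zero_imp_unit)
  then obtain K where K: "K \<in> carrier_mat (a - 1) (a - 1)" and JK: "?J * K = 1\<^sub>m (a - 1)"
    unfolding Units_def by (auto simp: ring_mat_simps)
  define y where "y = vec (a - 1) (\<lambda>r. e (r + 1))"
  define x where "x = K *\<^sub>v y"
  have x: "x \<in> carrier_vec (a - 1)" and Jx: "?J *\<^sub>v x = y"
    using J K JK by (simp_all add: x_def y_def assoc_mult_mat_vec[symmetric])
  define \<delta> where "\<delta> i = (if i \<in> {2..a} then vec_index x (i - 2) else 0)" for i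
  have Suc_Suc_minus_2: "Suc (Suc (i - 2)) = i" if "2 \<le> i" for i
    using that by arith
  have "(\<Sum>i\<in>{2..a}. deriv (\<lambda>z. barf of_rat a b ct (ct(i := z)) j) (ct i) * \<delta> i) = e j"
    if j: "j \<in> {1..a - 1}" for j
  proof -
    have "(\<Sum>i\<in>{2..a}. deriv (\<lambda>z. barf of_rat a b ct (ct(i := z)) j) (ct i) * \<delta> i)
        = (\<Sum>s\<in>{0..<a - 1}. ?J $$ (j - 1, s) * vec_index x s)"
      using j assms(2) Suc_Suc_minus_2
      by (intro sum.reindex_bij_witness[of _ "\<lambda>s. s + 2" "\<lambda>i. i - 2"]) (auto simp: barf_jacobian_def \<delta>_def)
    also have "\<dots> = vec_index (?J *\<^sub>v x) (j - 1)"
      using x j by (auto simp: scalar_prod_def barf_jacobian_def)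
    moreover have "j - 1 < a - 1" "j - 1 + 1 = j"
      using j by auto
    ultimately show ?thesis
      using Jx by (simp add: y_def)
  qed
  moreover have "\<delta> i = 0" if "i \<notin> {2..a}" for i
    using that by (auto simp: \<delta>_def)
  ultimately show ?thesis
    using that by blast
qed

definition system_residual :: "nat \<Rightarrow> nat \<Rightarrow> nat \<Rightarrow> (nat \<Rightarrow> complex) \<Rightarrow> (nat \<Rightarrow> complex fps)
    \<Rightarrow> (nat \<Rightarrow> nat \<Rightarrow> (nat \<Rightarrow> nat) \<Rightarrow> complex)
    \<Rightarrow> (nat \<Rightarrow> nat \<Rightarrow> (nat \<Rightarrow> nat) \<Rightarrow> nat \<Rightarrow> nat \<Rightarrow> complex)
    \<Rightarrow> (nat \<Rightarrow> complex fps) \<Rightarrow> nat \<Rightarrow> complex fps" where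
  "system_residual a b d ct C al1 al2 c j = barf fsc a b C c j
     - (fps_X ^ (d * (b + j)) * fps_const (fcoef of_rat a b ct (b + j)) + oval a C al1 al2 j c)"

lemma solves_iff_residual:
  "solves a b d ct C al1 al2 K c \<longleftrightarrow>
    (\<forall>j\<in>{1..a - 1}. fps_X ^ (d * (b + j) + K) dvd system_residual a b d ct C al1 al2 c j)"
  by (simp add: solves_def system_residual_def)

lemma solves_Suc_of_correction:
  assumes adm: "o_admissible a b d al1 al2" and "0 < k"
    and c0: "\<And>i. i \<in> {2..a} \<Longrightarrow> fps_lead (d * i) (c0 i) (ct i)"
    and C: "\<And>i. i \<in> {2..a} \<Longrightarrow> fps_lead (d * i) (C i) (ct i)"
    and sol: "solves a b d ct C al1 al2 k c0"
    and \<delta>: "\<And>i. i \<notin> {2..a} \<Longrightarrow> \<delta> i = 0"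
    and linear: "\<And>j. j \<in> {1..a - 1} \<Longrightarrow>
      (\<Sum>i\<in>{2..a}. deriv (\<lambda>z. barf of_rat a b ct (ct(i := z)) j) (ct i) * \<delta> i)
        = - fps_nth (system_residual a b d ct C al1 al2 c0 j) (d * (b + j) + k)"
  shows "solves a b d ct C al1 al2 (k + 1) (\<lambda>i. c0 i + fps_X ^ (d * i + k) * fps_const (\<delta> i))"
  unfolding solves_iff_residual
proof
  fix j assume j: "j \<in> {1..a - 1}"
  let ?c1 = "\<lambda>i. c0 i + fps_X ^ (d * i + k) * fps_const (\<delta> i)" and ?N = "d * (b + j) + k"
    and ?R = "system_residual a b d ct C al1 al2"
  let ?e = "fps_nth (?R c0 j) ?N"
  have "fps_X ^ ?N dvd ?R c0 j"
    using sol j unfolding solves_iff_residual by blast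
  then have "fps_lead ?N (?R c0 j) ?e"
    by (rule fps_lead_nth)
  moreover have "fps_lead ?N (barf fsc a b C ?c1 j - barf fsc a b C c0 j)
      (\<Sum>i\<in>{2..a}. deriv (\<lambda>z. barf of_rat a b ct (ct(i := z)) j) (ct i) * \<delta> i)"
    using j \<open>0 < k\<close> by (intro fps_lead_barf_perturb c0 C \<delta>) auto
  moreover have "fps_lead ?N (oval a C al1 al2 j ?c1 - oval a C al1 al2 j c0) 0"
    unfolding fps_lead_0_iff by (rule oval_perturb[OF adm \<open>0 < k\<close> c0 C]) simp_all
  ultimately have "fps_lead ?N (?R c0 j + (barf fsc a b C ?c1 j - barf fsc a b C c0 j)
      - (oval a C al1 al2 j ?c1 - oval a C al1 al2 j c0)) (?e + - ?e - 0)"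
    unfolding linear[OF j] by (intro fps_lead_diff fps_lead_add)
  moreover have "?R c0 j + (barf fsc a b C ?c1 j - barf fsc a b C c0 j)
      - (oval a C al1 al2 j ?c1 - oval a C al1 al2 j c0) = ?R ?c1 j"
    by (simp add: system_residual_def algebra_simps)
  ultimately show "fps_X ^ (d * (b + j) + (k + 1)) dvd ?R ?c1 j"
    by (simp add: fps_lead_0_iff add.assoc)
qed

theorem mainTheorem11:
  fixes a b d k :: nat
    and ct :: "nat \<Rightarrow> complex"
    and C c0 :: "nat \<Rightarrow> complex fps"
    and al1 :: "nat \<Rightarrow> nat \<Rightarrow> (nat \<Rightarrow> nat) \<Rightarrow> complex"
    and al2 :: "nat \<Rightarrow> nat \<Rightarrow> (nat \<Rightarrow> nat) \<Rightarrow> nat \<Rightarrow> nat \<Rightarrow> complex"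
  assumes "2 \<le> a" and "a < b" and "\<not> a dvd b" and "0 < d" and "0 < k"
    and "condT a b ct"
    and "\<forall>i\<in>{2..a}. fps_X ^ (d * i + 1) dvd C i - fps_X ^ (d * i) * fps_const (ct i)"
    and "o_admissible a b d al1 al2"
    and "solves a b d ct C al1 al2 k c0"
    and "\<forall>i\<in>{2..a}. fps_X ^ (d * i + 1) dvd c0 i - fps_X ^ (d * i) * fps_const (ct i)"
  shows "\<exists>c1 :: nat \<Rightarrow> complex fps. solves a b d ct C al1 al2 (k + 1) c1 \<and>
           (\<forall>i\<in>{2..a}. fps_X ^ (d * i + k) dvd c1 i - c0 i)"
proof -
  have C: "fps_lead (d * i) (C i) (ct i)" and c0: "fps_lead (d * i) (c0 i) (ct i)" if "i \<in> {2..a}" for i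
    using assms(7,10) that unfolding fps_lead_def by blast+
  obtain \<delta> where \<delta>: "\<And>i. i \<notin> {2..a} \<Longrightarrow> \<delta> i = 0"
    and linear: "\<And>j. j \<in> {1..a - 1} \<Longrightarrow>
      (\<Sum>i\<in>{2..a}. deriv (\<lambda>z. barf of_rat a b ct (ct(i := z)) j) (ct i) * \<delta> i)
        = - fps_nth (system_residual a b d ct C al1 al2 c0 j) (d * (b + j) + k)"
    using barf_jacobian_solvable[OF det_barf_jacobian_nonzero[OF assms(6,1,3)] assms(1),
        where e = "\<lambda>j. - fps_nth (system_residual a b d ct C al1 al2 c0 j) (d * (b + j) + k)"]
    by blast
  have "solves a b d ct C al1 al2 (k + 1) (\<lambda>i. c0 i + fps_X ^ (d * i + k) * fps_const (\<delta> i))"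
    using assms(8,5) c0 C assms(9) \<delta> linear by (rule solves_Suc_of_correction)
  moreover have "\<forall>i\<in>{2..a}. fps_X ^ (d * i + k) dvd (c0 i + fps_X ^ (d * i + k) * fps_const (\<delta> i)) - c0 i"
    by simp
  ultimately show ?thesis by blast
qed

end
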